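(* Let $q$ be a prime power, $\beta$ a primitive element of $\mathbb{F}_{q^2}$, $\mathrm{Tr}(x)=x+x^q$, and $\Psi:\mathbb{F}_{q^2}^n\to\mathbb{F}_q^{2n}$, $\Psi(\alpha_0,\ldots,\alpha_{n-1})=\left(\mathrm{Tr}(\beta\alpha_0),\ldots,\mathrm{Tr}(\beta\alpha_{n-1}),\mathrm{Tr}(\beta^q\alpha_0),\ldots,\mathrm{Tr}(\beta^q\alpha_{n-1})\right)$. Let $\mathscr{C}\subseteq\mathbb{F}_{q^2}^n$. Then $\mathscr{C}$ is an ($\mathbb{F}_q$-linear) additive conjucyclic code of length $n$ over $\mathbb{F}_{q^2}$ if and only if $\mathscr{D}=\Psi(\mathscr{C})$ is a $q$-ary linear cyclic code of length $2n$. Moreover, in this case the minimum Hamming weight of $\mathscr{C}$ equals the minimum symplectic weight of $\mathscr{D}$: $w_h(\mathscr{C})=w_s(\mathscr{D})$.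
   Context: An ($\mathbb{F}_q$-linear) additive code of length $n$ over $\mathbb{F}_{q^2}$ is an $\mathbb{F}_q$-subspace of $\mathbb{F}_{q^2}^n$. It is conjucyclic if it is closed under $T(c_0,\ldots,c_{n-1})=(c_{n-1}^q,c_0,\ldots,c_{n-2})$. A $q$-ary linear cyclic code of length $2n$ is an $\mathbb{F}_q$-subspace of $\mathbb{F}_q^{2n}$ closed under $\sigma(v_0,\ldots,v_{2n-1})=(v_{2n-1},v_0,\ldots,v_{2n-2})$. For $u\in\mathbb{F}_{q^2}^n$, $w_h(u)$ is the number of nonzero coordinates; for $v\in\mathbb{F}_q^{2n}$, $w_s(v)=\#\{j\in\{0,\ldots,n-1\}:(v_j,v_{n+j})\neq(0,0)\}$. The minimum Hamming (resp. symplectic) weight of a code is the minimum of $w_h$ (resp. $w_s$) over its nonzero codewords. *)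

theory Defs
  imports "HOL-Computational_Algebra.Primes"
begin

text \<open>The field F_{q^2} is a finite field type 'a with CARD('a) = q^2;
  F_q is realised as its unique subfield of order q, namely {x. x^q = x}.
  Vectors of length n are lists of length n.\<close>

definition subF :: "nat \<Rightarrow> ('a::field) set" where
  "subF q = {x. x ^ q = x}"

definition tr :: "nat \<Rightarrow> 'a::field \<Rightarrow> 'a" where
  "tr q x = x + x ^ q"

definition primitive_elem :: "'a::field \<Rightarrow> bool" where
  "primitive_elem b \<longleftrightarrow> (\<forall>x. x \<noteq> 0 \<longrightarrow> (\<exists>k::nat. x = b ^ k))"

definition subspace_over :: "'a::field set \<Rightarrow> nat \<Rightarrow> 'a list set \<Rightarrow> bool" where
  "subspace_over K m C \<longleftrightarrow>
     C \<subseteq> {v. length v = m} \<and> replicate m 0 \<in> C \<and>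
     (\<forall>x\<in>C. \<forall>y\<in>C. map2 (+) x y \<in> C) \<and>
     (\<forall>a\<in>K. \<forall>x\<in>C. map (\<lambda>t. a * t) x \<in> C)"

definition conj_shift :: "nat \<Rightarrow> 'a::field list \<Rightarrow> 'a list" where
  "conj_shift q c = (last c ^ q) # butlast c"

definition cyc_shift :: "'a list \<Rightarrow> 'a list" where
  "cyc_shift v = last v # butlast v"

definition additive_conjucyclic :: "nat \<Rightarrow> nat \<Rightarrow> 'a::field list set \<Rightarrow> bool" where
  "additive_conjucyclic q n C \<longleftrightarrow>
     subspace_over (subF q) n C \<and> (\<forall>c\<in>C. conj_shift q c \<in> C)"

definition linear_cyclic :: "nat \<Rightarrow> nat \<Rightarrow> 'a::field list set \<Rightarrow> bool" where
  "linear_cyclic q m D \<longleftrightarrow>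
     D \<subseteq> {v. set v \<subseteq> subF q} \<and> subspace_over (subF q) m D \<and>
     (\<forall>v\<in>D. cyc_shift v \<in> D)"

definition Psi :: "nat \<Rightarrow> 'a::field \<Rightarrow> 'a list \<Rightarrow> 'a list" where
  "Psi q b a = map (\<lambda>x. tr q (b * x)) a @ map (\<lambda>x. tr q (b ^ q * x)) a"

definition w_h :: "'a::zero list \<Rightarrow> nat" where
  "w_h u = card {j. j < length u \<and> u ! j \<noteq> 0}"

definition w_s :: "nat \<Rightarrow> 'a::zero list \<Rightarrow> nat" where
  "w_s n v = card {j. j < n \<and> (v ! j, v ! (n + j)) \<noteq> (0, 0)}"

definition min_hamming :: "'a::zero list set \<Rightarrow> nat" where
  "min_hamming C = Min {w_h c | c. c \<in> C \<and> c \<noteq> replicate (length c) 0}"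

definition min_symplectic :: "nat \<Rightarrow> 'a::zero list set \<Rightarrow> nat" where
  "min_symplectic n D = Min {w_s n v | v. v \<in> D \<and> v \<noteq> replicate (length v) 0}"

end

(* Psi is F_q-linear and injective: Tr(beta x) = Tr(beta^q x) = 0 is a linear system
   in x and x^q with determinant beta^2 - beta^(2q), which is nonzero because the
   primitive element beta has multiplicative order q^2 - 1 > 2q - 2.  Since
   Tr(beta x^q) = Tr(beta^q x), Psi turns the conjucyclic shift into the cyclic shift,
   so both code properties transfer along the bijection C -> Psi(C).  Finally the
   entries j and n + j of Psi(c) vanish together exactly when c_j = 0, hence
   w_s(Psi c) = w_h(c). *)

theory Submission
  imports Defs "HOL-Number_Theory.Residues" "HOL-Computational_Algebra.Polynomial"
begin

lemma nonzero_power_card_minus_one: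
  fixes x :: "'a::{finite,field}"
  assumes "x \<noteq> 0"
  shows "x ^ (card (UNIV :: 'a set) - 1) = 1"
proof -
  define U where "U = (UNIV - {0} :: 'a set)"
  have card_U: "card U = card (UNIV :: 'a set) - 1"
    unfolding U_def by (simp add: card_Diff_singleton)
  have "bij_betw ((*) x) U U"
    unfolding U_def by (rule bij_betwI[of _ _ _ "\<lambda>y. y / x"]) (use assms in auto)
  then have "(\<Prod>y\<in>U. x * y) = \<Prod>U"
    by (rule prod.reindex_bij_betw)
  then have "x ^ card U * \<Prod>U = 1 * \<Prod>U"
    by (simp add: prod.distrib)
  moreover have "\<Prod>U \<noteq> 0"
    unfolding U_def by simp
  ultimately show ?thesis
    using card_U by simp
qed

lemma power_card_eq_self:
  fixes x :: "'a::{finite,field}"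
  shows "x ^ card (UNIV :: 'a set) = x"
proof (cases "x = 0")
  case False
  have "x ^ card (UNIV :: 'a set) = x * x ^ (card (UNIV :: 'a set) - 1)"
    using finite_UNIV_card_ge_0[where 'a='a] by (simp flip: power_Suc)
  then show ?thesis
    using nonzero_power_card_minus_one[OF False] by simp
qed (use finite_UNIV_card_ge_0[where 'a='a] in simp)

lemma CHAR_eq_if_card_prime_power:
  assumes "prime p" and "k > 0" and "card (UNIV :: 'a::{finite,field} set) = p ^ k"
  shows "CHAR('a) = p"
proof -
  have prime_char: "prime CHAR('a)"
    by (rule prime_CHAR_semidom[OF finite_imp_CHAR_pos[OF finite_UNIV]])
  then have "CHAR('a) dvd p"
    using CHAR_dvd_CARD[where 'a='a] assms(3) prime_dvd_power by metis
  then show ?thesis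
    using prime_char assms(1) primes_dvd_imp_eq by blast
qed

lemma primitive_elem_nonzero:
  fixes b :: "'a::{finite,field}"
  assumes "primitive_elem b" and "card (UNIV :: 'a set) > 2"
  shows "b \<noteq> 0"
proof
  assume "b = 0"
  have "UNIV \<subseteq> {0, 1 :: 'a}"
  proof
    fix x :: 'a
    show "x \<in> {0, 1}"
    proof (cases "x = 0")
      case False
      then obtain k where "x = 0 ^ k"
        using assms(1) \<open>b = 0\<close> unfolding primitive_elem_def by blast
      then show ?thesis
        by (simp add: power_0_left)
    qed simp
  qed
  then have "card (UNIV :: 'a set) \<le> card {0, 1 :: 'a}"
    by (intro card_mono) auto
  also have "\<dots> \<le> 2"
    by (rule card_insert_le_m1) auto
  finally show False
    using assms(2) by simp
qed

lemma primitive_elem_order_bound: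
  fixes b :: "'a::{finite,field}"
  assumes "primitive_elem b" and "b ^ m = 1" and "m > 0"
  shows "card (UNIV :: 'a set) - 1 \<le> m"
proof -
  define P :: "'a poly" where "P = monom 1 m - 1"
  have poly_P: "poly P x = x ^ m - 1" for x
    by (simp add: P_def poly_monom)
  have "P \<noteq> 0"
    using poly_P[of 0] assms(3) by (auto simp: zero_power)
  have "UNIV - {0} \<subseteq> {x. poly P x = 0}"
  proof
    fix x :: 'a
    assume "x \<in> UNIV - {0}"
    then obtain k where "x = b ^ k"
      using assms(1) unfolding primitive_elem_def by blast
    then have "x ^ m = (b ^ m) ^ k"
      by (simp flip: power_mult add: mult.commute)
    then show "x \<in> {x. poly P x = 0}"
      using assms(2) poly_P by simp
  qed
  then have "card (UNIV - {0 :: 'a}) \<le> card {x. poly P x = 0}"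
    by (intro card_mono) auto
  also have "\<dots> \<le> degree P"
    using card_poly_roots_bound[OF \<open>P \<noteq> 0\<close>] .
  also have "degree P \<le> m"
    unfolding P_def by (intro degree_diff_le) (auto simp: degree_monom_le)
  finally show ?thesis
    by (simp add: card_Diff_singleton)
qed

lemma subspace_over_image_iff:
  fixes \<Phi> :: "'a::field list \<Rightarrow> 'a list"
  assumes "inj \<Phi>" and C: "C \<subseteq> {v. length v = n}"
    and length_image: "\<And>x. length x = n \<Longrightarrow> length (\<Phi> x) = m"
    and zero: "\<Phi> (replicate n 0) = replicate m 0"
    and add: "\<And>x y. length x = n \<Longrightarrow> length y = n \<Longrightarrow> \<Phi> (map2 (+) x y) = map2 (+) (\<Phi> x) (\<Phi> y)"
    and scale: "\<And>a x. a \<in> K \<Longrightarrow> \<Phi> (map (\<lambda>t. a * t) x) = map (\<lambda>t. a * t) (\<Phi> x)"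
  shows "subspace_over K n C \<longleftrightarrow> subspace_over K m (\<Phi> ` C)"
proof -
  have mem: "\<Phi> x \<in> \<Phi> ` C \<longleftrightarrow> x \<in> C" for x
    using \<open>inj \<Phi>\<close> by (rule inj_image_mem_iff)
  have "(\<forall>x\<in>C. \<forall>y\<in>C. map2 (+) x y \<in> C) \<longleftrightarrow>
      (\<forall>x\<in>C. \<forall>y\<in>C. map2 (+) (\<Phi> x) (\<Phi> y) \<in> \<Phi> ` C)"
  proof (intro ball_cong refl)
    fix x y
    assume "x \<in> C" and "y \<in> C"
    then have "length x = n" and "length y = n"
      using C by auto
    then show "map2 (+) x y \<in> C \<longleftrightarrow> map2 (+) (\<Phi> x) (\<Phi> y) \<in> \<Phi> ` C"
      using mem[of "map2 (+) x y"] by (simp add: add)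
  qed
  moreover have "(\<forall>a\<in>K. \<forall>x\<in>C. map (\<lambda>t. a * t) x \<in> C) \<longleftrightarrow>
      (\<forall>a\<in>K. \<forall>v\<in>\<Phi> ` C. map (\<lambda>t. a * t) v \<in> \<Phi> ` C)"
    by (auto simp: mem simp flip: scale)
  moreover have "replicate n 0 \<in> C \<longleftrightarrow> replicate m 0 \<in> \<Phi> ` C"
    by (simp flip: zero add: mem)
  ultimately show ?thesis
    using C length_image unfolding subspace_over_def by auto
qed

lemma shift_closed_image_iff:
  assumes "inj \<Phi>" and "\<And>c. c \<in> C \<Longrightarrow> \<Phi> (S c) = T (\<Phi> c)"
  shows "(\<forall>c\<in>C. S c \<in> C) \<longleftrightarrow> (\<forall>v\<in>\<Phi> ` C. T v \<in> \<Phi> ` C)"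
  using assms by (auto simp: inj_image_mem_iff simp flip: assms(2))

lemma min_symplectic_image:
  assumes "\<And>c. c \<in> C \<Longrightarrow> w_s n (\<Phi> c) = w_h c"
    and "\<And>c. c \<in> C \<Longrightarrow> \<Phi> c = replicate (length (\<Phi> c)) 0 \<longleftrightarrow> c = replicate (length c) 0"
  shows "min_symplectic n (\<Phi> ` C) = min_hamming C"
proof -
  have "{w_s n v | v. v \<in> \<Phi> ` C \<and> v \<noteq> replicate (length v) 0}
      = {w_s n (\<Phi> c) | c. c \<in> C \<and> \<Phi> c \<noteq> replicate (length (\<Phi> c)) 0}"
    by blast
  also have "\<dots> = {w_h c | c. c \<in> C \<and> c \<noteq> replicate (length c) 0}"
    using assms by metis
  finally show ?thesis
    unfolding min_symplectic_def min_hamming_def by simp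
qed

locale trace_embedding =
  fixes q :: nat and \<beta> :: "'a::{finite,field}"
  assumes prime_power: "\<exists>p k. prime p \<and> k > 0 \<and> q = p ^ k"
    and card_UNIV: "card (UNIV :: 'a set) = q ^ 2"
    and primitive: "primitive_elem \<beta>"
begin

lemma q_ge_2: "q \<ge> 2"
proof -
  obtain p k where "prime p" "k > 0" "q = p ^ k"
    using prime_power by blast
  then show ?thesis
    using prime_ge_2_nat[of p] self_le_power[of p k] by simp
qed

lemma frobenius_add: "(x + y :: 'a) ^ q = x ^ q + y ^ q"
proof -
  obtain p k where p: "prime p" "k > 0" "q = p ^ k"
    using prime_power by blast
  then have "CHAR('a) = p"
    using card_UNIV by (intro CHAR_eq_if_card_prime_power[of p "k * 2"]) (simp_all add: power_mult)
  then show ?thesis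
    using freshmans_dream'[where 'a='a, of q k] p by simp
qed

lemma frobenius_involution: "((x :: 'a) ^ q) ^ q = x"
  using power_card_eq_self[of x] card_UNIV by (simp flip: power_mult add: power2_eq_square)

lemma tr_add: "tr q (x + y :: 'a) = tr q x + tr q y"
  unfolding tr_def by (simp add: frobenius_add)

lemma tr_diff: "tr q (x - y :: 'a) = tr q x - tr q y"
  using tr_add[of "x - y" y] by simp

lemma tr_zero: "tr q (0 :: 'a) = 0"
  using q_ge_2 by (simp add: tr_def)

lemma tr_frobenius: "tr q ((x :: 'a) ^ q) = tr q x"
  unfolding tr_def by (simp add: frobenius_involution)

lemma tr_in_subF: "tr q (x :: 'a) \<in> subF q"
  unfolding subF_def tr_def by (simp add: frobenius_add frobenius_involution add.commute)

lemma tr_mult_subF: "a \<in> subF q \<Longrightarrow> tr q (a * x :: 'a) = a * tr q x"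
  unfolding tr_def subF_def by (simp add: power_mult_distrib distrib_left)

lemma conjugate_beta_square_ne: "(\<beta> ^ q) ^ 2 \<noteq> \<beta> ^ 2"
proof
  assume eq: "(\<beta> ^ q) ^ 2 = \<beta> ^ 2"
  have "q ^ 2 > 2"
    using q_ge_2 mult_le_mono[of 2 q 2 q] by (simp add: power2_eq_square)
  then have "\<beta> \<noteq> 0"
    using primitive_elem_nonzero[OF primitive] card_UNIV by simp
  have "2 * q - 2 + 2 = q * 2"
    using q_ge_2 by simp
  then have "\<beta> ^ (2 * q - 2) * \<beta> ^ 2 = (\<beta> ^ q) ^ 2"
    by (metis power_add power_mult)
  then have "\<beta> ^ (2 * q - 2) = 1"
    using eq \<open>\<beta> \<noteq> 0\<close> by simp
  then have "q ^ 2 - 1 \<le> 2 * q - 2"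
    using primitive_elem_order_bound[OF primitive] q_ge_2 card_UNIV by fastforce
  moreover have "2 * q \<le> q * q"
    using q_ge_2 by simp
  ultimately show False
    using q_ge_2 unfolding power2_eq_square by linarith
qed

lemma trace_pair_eq_zero:
  assumes "tr q (\<beta> * x) = 0" and "tr q (\<beta> ^ q * x) = 0"
  shows "x = 0"
proof -
  have A: "\<beta> * x + \<beta> ^ q * x ^ q = 0"
    using assms(1) by (simp add: tr_def power_mult_distrib)
  have B: "\<beta> ^ q * x + \<beta> * x ^ q = 0"
    using assms(2) by (simp add: tr_def power_mult_distrib frobenius_involution)
  have "(\<beta> ^ 2 - (\<beta> ^ q) ^ 2) * x = \<beta> * (\<beta> * x + \<beta> ^ q * x ^ q) - \<beta> ^ q * (\<beta> ^ q * x + \<beta> * x ^ q)"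
    by (simp add: algebra_simps power2_eq_square)
  also have "\<dots> = 0"
    by (simp add: A B)
  finally show ?thesis
    using conjugate_beta_square_ne by simp
qed

lemma trace_pair_inj:
  assumes "tr q (\<beta> * x) = tr q (\<beta> * y)" and "tr q (\<beta> ^ q * x) = tr q (\<beta> ^ q * y)"
  shows "x = y"
  using trace_pair_eq_zero[of "x - y"] assms by (simp add: right_diff_distrib tr_diff)

lemma length_Psi: "length (Psi q \<beta> c) = 2 * length c"
  by (simp add: Psi_def)

lemma inj_Psi: "inj (Psi q \<beta>)"
proof
  fix a b
  assume eq: "Psi q \<beta> a = Psi q \<beta> b"
  then have "length a = length b"
    using length_Psi by (metis mult_left_cancel zero_neq_numeral)
  with eq have first: "map (\<lambda>x. tr q (\<beta> * x)) a = map (\<lambda>x. tr q (\<beta> * x)) b"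
    and second: "map (\<lambda>x. tr q (\<beta> ^ q * x)) a = map (\<lambda>x. tr q (\<beta> ^ q * x)) b"
    by (simp_all add: Psi_def)
  show "a = b"
  proof (rule nth_equalityI)
    fix i
    assume "i < length a"
    then show "a ! i = b ! i"
      using \<open>length a = length b\<close> nth_map first second by (metis trace_pair_inj)
  qed fact
qed

lemma Psi_replicate_zero: "Psi q \<beta> (replicate n 0) = replicate (2 * n) 0"
  by (simp add: Psi_def tr_zero mult_2 replicate_add)

lemma Psi_eq_zero_iff: "Psi q \<beta> c = replicate (length (Psi q \<beta> c)) 0 \<longleftrightarrow> c = replicate (length c) 0"
  using inj_Psi by (metis inj_eq length_Psi Psi_replicate_zero)

lemma Psi_map2_add:
  assumes "length x = length y"
  shows "Psi q \<beta> (map2 (+) x y) = map2 (+) (Psi q \<beta> x) (Psi q \<beta> y)"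
  using assms by (induction x y rule: list_induct2) (simp_all add: Psi_def distrib_left tr_add)

lemma Psi_map_mult:
  assumes "a \<in> subF q"
  shows "Psi q \<beta> (map (\<lambda>t. a * t) x) = map (\<lambda>t. a * t) (Psi q \<beta> x)"
proof -
  have "tr q (b * (a * x)) = a * tr q (b * x)" for b x
    using tr_mult_subF[OF assms, of "b * x"] by (simp add: mult.left_commute)
  then show ?thesis
    by (simp add: Psi_def)
qed

lemma set_Psi_subset: "set (Psi q \<beta> c) \<subseteq> subF q"
  by (auto simp: Psi_def tr_in_subF)

lemma Psi_conj_shift:
  assumes "c \<noteq> []"
  shows "Psi q \<beta> (conj_shift q c) = cyc_shift (Psi q \<beta> c)"
proof -
  have "tr q (\<beta> * x ^ q) = tr q (\<beta> ^ q * x)" for x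
    using tr_frobenius[of "\<beta> ^ q * x"] by (simp add: power_mult_distrib frobenius_involution)
  moreover have "tr q (\<beta> ^ q * x ^ q) = tr q (\<beta> * x)" for x
    using tr_frobenius[of "\<beta> * x"] by (simp add: power_mult_distrib)
  moreover obtain ys y where "c = ys @ [y]"
    using assms by (cases c rule: rev_exhaust) auto
  ultimately show ?thesis
    by (simp add: Psi_def conj_shift_def cyc_shift_def butlast_append)
qed

lemma w_s_Psi: "w_s (length c) (Psi q \<beta> c) = w_h c"
proof -
  have "(Psi q \<beta> c ! j, Psi q \<beta> c ! (length c + j)) \<noteq> (0, 0) \<longleftrightarrow> c ! j \<noteq> 0"
    if "j < length c" for j
    using that trace_pair_eq_zero[of "c ! j"] by (auto simp: Psi_def nth_append tr_zero)
  then show ?thesis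
    unfolding w_s_def w_h_def by (metis (lifting))
qed

end

theorem theorem3p6:
  fixes q n :: nat and \<beta> :: "'a::{finite,field}" and C :: "'a list set"
  assumes "\<exists>p k. prime p \<and> k > 0 \<and> q = p ^ k"
    and "card (UNIV :: 'a set) = q ^ 2"
    and "primitive_elem \<beta>"
    and "n > 0"
    and "C \<subseteq> {v. length v = n}"
  shows "(additive_conjucyclic q n C \<longleftrightarrow> linear_cyclic q (2 * n) (Psi q \<beta> ` C))
    \<and> (additive_conjucyclic q n C \<longrightarrow> min_hamming C = min_symplectic n (Psi q \<beta> ` C))"
proof -
  interpret trace_embedding q \<beta>
    using assms(1-3) by unfold_locales
  have length_C: "c \<in> C \<Longrightarrow> length c = n" for c
    using assms(5) by auto
  have "subspace_over (subF q) n C \<longleftrightarrow> subspace_over (subF q) (2 * n) (Psi q \<beta> ` C)"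
    by (rule subspace_over_image_iff[OF inj_Psi assms(5)])
      (simp_all add: length_Psi Psi_replicate_zero Psi_map2_add Psi_map_mult)
  moreover have "(\<forall>c\<in>C. conj_shift q c \<in> C) \<longleftrightarrow> (\<forall>v\<in>Psi q \<beta> ` C. cyc_shift v \<in> Psi q \<beta> ` C)"
    using inj_Psi Psi_conj_shift length_C assms(4)
    by (intro shift_closed_image_iff) auto
  moreover have "min_symplectic n (Psi q \<beta> ` C) = min_hamming C"
    using w_s_Psi length_C Psi_eq_zero_iff by (intro min_symplectic_image) auto
  ultimately show ?thesis
    using set_Psi_subset unfolding additive_conjucyclic_def linear_cyclic_def by auto
qed

end
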